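(* Let $\mathcal{Y}$ be a finite alphabet, $n\in\mathbb{N}$, and let $P_0,P_1\in\mathcal{P}(\mathcal{Y}^{\otimes n})$ be classical probability distributions, viewed as diagonal density matrices in the basis indexed by $\mathcal{Y}^{\times n}$. Then for every pair of density matrices $\rho,\sigma\in\mathrm{D}(\mathcal{Y}^{\otimes n})$ whose diagonals (in that basis) coincide with those of $P_0$ and $P_1$ respectively, and every $\varepsilon\in(0,1]$, one has $\xi^{\varepsilon}_{H}(\rho\|\sigma)\le\xi^{\varepsilon}_{H}(P_0\|P_1)$. Moreover, there exist classical $P_0,P_1$, a density matrix $\sigma$ with the same diagonal as $P_1$, and $\varepsilon\in(0,1)$ such that $\xi^{\varepsilon}_{H}(P_0\|\sigma)<\xi^{\varepsilon}_{H}(P_0\|P_1)$.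
   Context: $\mathcal{Y}^{\otimes n}$ denotes the complex Euclidean space with orthonormal basis indexed by sequences in $\mathcal{Y}^{\times n}$; $\mathrm{D}(\cdot)$ denotes density matrices (positive semidefinite, trace one) and $\mathcal{P}(\cdot)\subset\mathrm{D}(\cdot)$ those diagonal in the given basis (classical distributions). For $\rho\in\mathrm{D}(\mathcal{Y}^{\otimes n})$, $\sigma\succeq 0$ and $\varepsilon\in[0,1]$, the optimal type II error is $\xi^{\varepsilon}_{H}(\rho\|\sigma):=\min\{\mathrm{Tr}(\sigma A):\ 0\preceq A\preceq\mathbb{I},\ \mathrm{Tr}(\rho A)\ge 1-\varepsilon\}$. *)

theory Defs
  imports Complex_Main
begin

text \<open>Matrices on the space with orthonormal basis indexed by the finite set I are
  represented as functions I x I -> complex (entries outside I are ignored).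
  For the space Y^{tensor n} the index set is Y^{x n}: words of length n over Y.\<close>

definition seqs :: "'a set \<Rightarrow> nat \<Rightarrow> 'a list set" where
  "seqs Y n = {xs. length xs = n \<and> set xs \<subseteq> Y}"

type_synonym 'i cmat = "'i \<Rightarrow> 'i \<Rightarrow> complex"

definition mmul :: "'i set \<Rightarrow> 'i cmat \<Rightarrow> 'i cmat \<Rightarrow> 'i cmat" where
  "mmul I A B = (\<lambda>i j. \<Sum>k\<in>I. A i k * B k j)"

definition mtrace :: "'i set \<Rightarrow> 'i cmat \<Rightarrow> complex" where
  "mtrace I A = (\<Sum>i\<in>I. A i i)"

definition idm :: "'i cmat" where
  "idm = (\<lambda>i j. if i = j then 1 else 0)"

text \<open>Positive semidefinite: <v, A v> is a nonnegative real for all vectors v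
  (for complex matrices this includes Hermiticity).\<close>
definition psd :: "'i set \<Rightarrow> 'i cmat \<Rightarrow> bool" where
  "psd I A \<longleftrightarrow> (\<forall>v :: 'i \<Rightarrow> complex.
     let q = (\<Sum>i\<in>I. \<Sum>j\<in>I. cnj (v i) * A i j * v j) in Im q = 0 \<and> Re q \<ge> 0)"

definition loewner_le :: "'i set \<Rightarrow> 'i cmat \<Rightarrow> 'i cmat \<Rightarrow> bool" where
  "loewner_le I A B \<longleftrightarrow> psd I (\<lambda>i j. B i j - A i j)"

definition density :: "'i set \<Rightarrow> 'i cmat \<Rightarrow> bool" where
  "density I \<rho> \<longleftrightarrow> psd I \<rho> \<and> mtrace I \<rho> = 1"

definition classical :: "'i set \<Rightarrow> 'i cmat \<Rightarrow> bool" where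
  "classical I P \<longleftrightarrow> density I P \<and> (\<forall>i\<in>I. \<forall>j\<in>I. i \<noteq> j \<longrightarrow> P i j = 0)"

text \<open>Optimal type II error xi_H^eps(rho||sigma): the minimum of Tr(sigma A) over tests
  0 <= A <= 1 with Tr(rho A) >= 1 - eps (traces of products of PSD matrices are real;
  the minimum is attained, so it equals the infimum).\<close>
definition xiH :: "'i set \<Rightarrow> real \<Rightarrow> 'i cmat \<Rightarrow> 'i cmat \<Rightarrow> real" where
  "xiH I \<epsilon> \<rho> \<sigma> = Inf {Re (mtrace I (mmul I \<sigma> A)) | A.
      loewner_le I (\<lambda>_ _. 0) A \<and> loewner_le I A idm \<and>
      Re (mtrace I (mmul I \<rho> A)) \<ge> 1 - \<epsilon>}"

end

theory Submission
  imports Defs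
begin

text \<open>Pinching: the diagonal part of a test is again a test, and against diagonal
  states only the diagonal of a test matters. Hence every test for the classical pair
  (P0, P1) yields a diagonal test with the same error probabilities for any pair
  (\<rho>, \<sigma>) with the same diagonals, so the optimal type II error for (\<rho>, \<sigma>) can only
  be smaller. It can be strictly smaller: for P0 = P1 uniform on two points the type II
  error of a test equals its probability of accepting P0, hence is at least 1 - \<epsilon>,
  whereas for \<sigma> = |+\<rangle>\<langle>+| the test |-\<rangle>\<langle>-| accepts P0 with probability 1/2 at type II
  error 0.\<close>

definition qform :: "'i set \<Rightarrow> 'i cmat \<Rightarrow> ('i \<Rightarrow> complex) \<Rightarrow> complex" where
  "qform I M v = (\<Sum>i\<in>I. \<Sum>j\<in>I. cnj (v i) * M i j * v j)"

definition diagonal :: "'i set \<Rightarrow> 'i cmat \<Rightarrow> bool" where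
  "diagonal I M \<longleftrightarrow> (\<forall>i\<in>I. \<forall>j\<in>I. i \<noteq> j \<longrightarrow> M i j = 0)"

definition diag_part :: "'i cmat \<Rightarrow> 'i cmat" where
  "diag_part M = (\<lambda>i j. if i = j then M i i else 0)"

definition is_test :: "'i set \<Rightarrow> 'i cmat \<Rightarrow> bool" where
  "is_test I A \<longleftrightarrow> loewner_le I (\<lambda>_ _. 0) A \<and> loewner_le I A idm"

definition type2_errors :: "'i set \<Rightarrow> real \<Rightarrow> 'i cmat \<Rightarrow> 'i cmat \<Rightarrow> real set" where
  "type2_errors I \<epsilon> \<rho> \<sigma> = {Re (mtrace I (mmul I \<sigma> A)) | A.
      is_test I A \<and> 1 - \<epsilon> \<le> Re (mtrace I (mmul I \<rho> A))}"

lemma xiH_eq_Inf_type2_errors: "xiH I \<epsilon> \<rho> \<sigma> = Inf (type2_errors I \<epsilon> \<rho> \<sigma>)"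
  unfolding xiH_def type2_errors_def is_test_def by (simp add: conj_assoc)

lemma classical_iff: "classical I P \<longleftrightarrow> density I P \<and> diagonal I P"
  unfolding classical_def diagonal_def ..

lemma finite_seqs: "finite Y \<Longrightarrow> finite (seqs Y n)"
  unfolding seqs_def using finite_lists_length_eq[of Y n] by (simp add: conj_commute)

lemma seqs_Suc_0: "seqs Y (Suc 0) = (\<lambda>y. [y]) ` Y"
  by (auto simp: seqs_def length_Suc_conv)

lemma psd_iff_qform: "psd I M \<longleftrightarrow> (\<forall>v. Im (qform I M v) = 0 \<and> 0 \<le> Re (qform I M v))"
  unfolding psd_def qform_def Let_def by simp

lemma psd_cong:
  assumes "\<And>i j. i \<in> I \<Longrightarrow> j \<in> I \<Longrightarrow> M i j = N i j"
  shows "psd I M \<longleftrightarrow> psd I N"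
proof -
  have "qform I M v = qform I N v" for v
    unfolding qform_def using assms by (intro sum.cong refl) auto
  then show ?thesis unfolding psd_iff_qform by simp
qed

lemma qform_unit_vector:
  assumes "finite I" "i \<in> I"
  shows "qform I M (\<lambda>k. if k = i then 1 else 0) = M i i"
  using assms
  by (simp add: qform_def if_distrib[of cnj] if_distrib[of "\<lambda>x. x * _"]
      if_distrib[of "\<lambda>x. _ * x"] cong: if_cong)

lemma sum_eq_two_point:
  assumes "finite I" "i \<in> I" "j \<in> I" "i \<noteq> j"
    "\<And>k. k \<in> I \<Longrightarrow> k \<noteq> i \<Longrightarrow> k \<noteq> j \<Longrightarrow> f k = 0"
  shows "(\<Sum>k\<in>I. f k) = f i + f j"
proof -
  have "(\<Sum>k\<in>I. f k) = (\<Sum>k\<in>{i, j}. f k)"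
    using assms by (intro sum.mono_neutral_right) auto
  then show ?thesis using assms(4) by simp
qed

lemma qform_two_point:
  assumes "finite I" "i \<in> I" "j \<in> I" "i \<noteq> j"
  shows "qform I M (\<lambda>k. if k = i then p else if k = j then q else 0) =
    cnj p * M i i * p + cnj p * M i j * q + cnj q * M j i * p + cnj q * M j j * q"
proof -
  let ?v = "\<lambda>k. if k = i then p else if k = j then q else 0"
  have row: "(\<Sum>b\<in>I. cnj (?v a) * M a b * ?v b)
      = cnj (?v a) * M a i * p + cnj (?v a) * M a j * q" for a
    using assms by (subst sum_eq_two_point[of I i j]) auto
  show ?thesis
    unfolding qform_def row using assms
    by (subst sum_eq_two_point[of I i j]) (auto simp: algebra_simps)
qed

lemma psd_diag_entry:
  assumes "finite I" "psd I M" "i \<in> I"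
  shows "Im (M i i) = 0 \<and> 0 \<le> Re (M i i)"
  using assms unfolding psd_iff_qform by (metis qform_unit_vector)

lemma psd_entry_bound:
  assumes "finite I" "psd I M" "i \<in> I" "j \<in> I"
  shows "cmod (M i j) \<le> Re (M i i) + Re (M j j)"
proof (cases "i = j")
  case True
  then show ?thesis using psd_diag_entry[OF assms(1-3)] by (simp add: cmod_eq_Re)
next
  case False
  have di: "Im (M i i) = 0" "0 \<le> Re (M i i)" and dj: "Im (M j j) = 0" "0 \<le> Re (M j j)"
    using psd_diag_entry[OF assms(1,2)] assms(3,4) by auto
  define f where "f p q = cnj p * M i i * p + cnj p * M i j * q + cnj q * M j i * p
    + cnj q * M j j * q" for p q
  have f: "Im (f p q) = 0 \<and> 0 \<le> Re (f p q)" for p q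
    using assms(2) qform_two_point[OF assms(1,3,4) False, of M p q]
    unfolding psd_iff_qform f_def by metis
  \<comment> \<open>testing with (1,1), (1,-1), (1,i), (1,-i) shows M j i = cnj (M i j) and bounds
      both parts of M i j\<close>
  have "Im (M i j) + Im (M j i) = 0" "Re (M i j) - Re (M j i) = 0"
    "0 \<le> Re (M i i) + Re (M j j) + Re (M i j) + Re (M j i)"
    "0 \<le> Re (M i i) + Re (M j j) - Re (M i j) - Re (M j i)"
    "0 \<le> Re (M i i) + Re (M j j) - Im (M i j) + Im (M j i)"
    "0 \<le> Re (M i i) + Re (M j j) + Im (M i j) - Im (M j i)"
    using f[of 1 1] f[of 1 \<i>] f[of 1 "-1"] f[of 1 "-\<i>"] di dj by (simp_all add: f_def)
  then have "\<bar>Re (M i j)\<bar> + \<bar>Im (M i j)\<bar> \<le> Re (M i i) + Re (M j j)" by linarith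
  then show ?thesis using cmod_le[of "M i j"] by linarith
qed

lemma psd_diagonal:
  assumes "finite I" "diagonal I M" "\<And>i. i \<in> I \<Longrightarrow> Im (M i i) = 0 \<and> 0 \<le> Re (M i i)"
  shows "psd I M"
  unfolding psd_iff_qform
proof
  fix v
  have "qform I M v = (\<Sum>i\<in>I. cnj (v i) * M i i * v i)"
    unfolding qform_def
  proof (intro sum.cong refl)
    fix i assume "i \<in> I"
    have "(\<Sum>j\<in>I. cnj (v i) * M i j * v j) = (\<Sum>j\<in>I. if j = i then cnj (v i) * M i i * v i else 0)"
      using assms(2) \<open>i \<in> I\<close> unfolding diagonal_def by (intro sum.cong) auto
    then show "(\<Sum>j\<in>I. cnj (v i) * M i j * v j) = cnj (v i) * M i i * v i"
      using assms(1) \<open>i \<in> I\<close> by simp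
  qed
  also have "\<dots> = (\<Sum>i\<in>I. M i i * of_real ((cmod (v i))\<^sup>2))"
    by (intro sum.cong refl) (subst complex_norm_square, simp add: mult_ac)
  finally have q: "qform I M v = \<dots>" .
  show "Im (qform I M v) = 0 \<and> 0 \<le> Re (qform I M v)"
    unfolding q Im_sum Re_sum using assms(3) by (auto intro: sum_nonneg)
qed

lemma psd_rank_one:
  assumes "0 \<le> c"
  shows "psd I (\<lambda>i j. of_real c * cnj (w i) * w j)"
  unfolding psd_iff_qform
proof
  fix v
  define s where "s = (\<Sum>j\<in>I. w j * v j)"
  have "qform I (\<lambda>i j. of_real c * cnj (w i) * w j) v
      = of_real c * (\<Sum>i\<in>I. \<Sum>j\<in>I. cnj (w i * v i) * (w j * v j))"
    unfolding qform_def sum_distrib_left by (intro sum.cong refl) (simp add: mult_ac)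
  also have "\<dots> = of_real c * (cnj s * s)"
    unfolding s_def cnj_sum sum_product ..
  also have "\<dots> = of_real (c * (cmod s)\<^sup>2)"
    by (subst of_real_mult, subst complex_norm_square) (simp add: mult_ac)
  finally show "Im (qform I (\<lambda>i j. of_real c * cnj (w i) * w j) v) = 0 \<and>
      0 \<le> Re (qform I (\<lambda>i j. of_real c * cnj (w i) * w j) v)"
    using assms by simp
qed

lemma is_test_iff: "is_test I A \<longleftrightarrow> psd I A \<and> psd I (\<lambda>i j. idm i j - A i j)"
  unfolding is_test_def loewner_le_def by simp

lemma is_test_idm: "finite I \<Longrightarrow> is_test I idm"
  unfolding is_test_iff by (auto intro!: psd_diagonal simp: idm_def diagonal_def)

lemma is_test_diag_entry:
  assumes "finite I" "is_test I A" "i \<in> I"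
  shows "Im (A i i) = 0 \<and> 0 \<le> Re (A i i) \<and> Re (A i i) \<le> 1"
  using psd_diag_entry[of I A i] psd_diag_entry[of I "\<lambda>i j. idm i j - A i j" i] assms
  unfolding is_test_iff by (simp add: idm_def)

lemma is_test_entry_bound:
  assumes "finite I" "is_test I A" "i \<in> I" "j \<in> I"
  shows "cmod (A i j) \<le> 2"
proof -
  have "cmod (A i j) \<le> Re (A i i) + Re (A j j)"
    using assms psd_entry_bound[of I A i j] unfolding is_test_iff by blast
  moreover have "Re (A i i) \<le> 1" "Re (A j j) \<le> 1"
    using is_test_diag_entry[OF assms(1,2)] assms(3,4) by auto
  ultimately show ?thesis by linarith
qed

lemma is_test_diag_part:
  assumes "finite I" "is_test I A"
  shows "is_test I (diag_part A)"
  using is_test_diag_entry[OF assms] assms(1)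
  unfolding is_test_iff diag_part_def
  by (auto intro!: psd_diagonal simp: idm_def diagonal_def)

lemma mtrace_mmul_diagonal:
  assumes "finite I" "diagonal I M \<or> diagonal I N"
  shows "mtrace I (mmul I M N) = (\<Sum>i\<in>I. M i i * N i i)"
  unfolding mtrace_def mmul_def
proof (intro sum.cong refl)
  fix i assume "i \<in> I"
  have "(\<Sum>k\<in>I. M i k * N k i) = (\<Sum>k\<in>I. if k = i then M i i * N i i else 0)"
    using assms(2) \<open>i \<in> I\<close> unfolding diagonal_def by (intro sum.cong) auto
  then show "(\<Sum>k\<in>I. M i k * N k i) = M i i * N i i"
    using assms(1) \<open>i \<in> I\<close> by simp
qed

lemma mtrace_mmul_diag_part:
  assumes "finite I" "diagonal I P" "\<And>i. i \<in> I \<Longrightarrow> M i i = P i i"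
  shows "mtrace I (mmul I M (diag_part A)) = mtrace I (mmul I P A)"
  using assms by (simp add: mtrace_mmul_diagonal diag_part_def diagonal_def)

lemma bdd_below_type2_errors:
  assumes "finite I"
  shows "bdd_below (type2_errors I \<epsilon> \<rho> \<sigma>)"
proof (rule bdd_belowI)
  fix x assume "x \<in> type2_errors I \<epsilon> \<rho> \<sigma>"
  then obtain A where x: "x = Re (mtrace I (mmul I \<sigma> A))" and A: "is_test I A"
    unfolding type2_errors_def by blast
  have "(\<Sum>i\<in>I. \<Sum>k\<in>I. - (2 * cmod (\<sigma> i k))) \<le> (\<Sum>i\<in>I. \<Sum>k\<in>I. Re (\<sigma> i k * A k i))"
  proof (intro sum_mono)
    fix i k assume "i \<in> I" "k \<in> I"
    then have "cmod (\<sigma> i k * A k i) \<le> cmod (\<sigma> i k) * 2"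
      unfolding norm_mult using is_test_entry_bound[OF assms A]
      by (intro mult_left_mono) auto
    then show "- (2 * cmod (\<sigma> i k)) \<le> Re (\<sigma> i k * A k i)"
      using abs_Re_le_cmod[of "\<sigma> i k * A k i"] by linarith
  qed
  also have "\<dots> = x" unfolding x mtrace_def mmul_def Re_sum ..
  finally show "(\<Sum>i\<in>I. \<Sum>k\<in>I. - (2 * cmod (\<sigma> i k))) \<le> x" .
qed

lemma trace_in_type2_errors:
  assumes "finite I" "mtrace I \<rho> = 1" "0 \<le> \<epsilon>"
  shows "Re (mtrace I \<sigma>) \<in> type2_errors I \<epsilon> \<rho> \<sigma>"
proof -
  have "mtrace I (mmul I M idm) = mtrace I M" for M
    by (subst mtrace_mmul_diagonal) (simp_all add: assms(1) diagonal_def idm_def mtrace_def)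
  then show ?thesis
    using assms is_test_idm[OF assms(1)] unfolding type2_errors_def mem_Collect_eq
    by (intro exI[of _ idm]) simp
qed

lemma xiH_le_test:
  assumes "finite I" "is_test I A" "1 - \<epsilon> \<le> Re (mtrace I (mmul I \<rho> A))"
  shows "xiH I \<epsilon> \<rho> \<sigma> \<le> Re (mtrace I (mmul I \<sigma> A))"
  unfolding xiH_eq_Inf_type2_errors
  using assms by (intro cInf_lower bdd_below_type2_errors) (auto simp: type2_errors_def)

lemma xiH_self_ge:
  assumes "finite I" "mtrace I \<rho> = 1" "0 \<le> \<epsilon>"
  shows "1 - \<epsilon> \<le> xiH I \<epsilon> \<rho> \<rho>"
  unfolding xiH_eq_Inf_type2_errors
  using trace_in_type2_errors[OF assms] by (intro cInf_greatest) (auto simp: type2_errors_def)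

lemma type2_errors_diagonal_subset:
  assumes "finite I" "diagonal I P0" "diagonal I P1"
    "\<And>i. i \<in> I \<Longrightarrow> \<rho> i i = P0 i i" "\<And>i. i \<in> I \<Longrightarrow> \<sigma> i i = P1 i i"
  shows "type2_errors I \<epsilon> P0 P1 \<subseteq> type2_errors I \<epsilon> \<rho> \<sigma>"
proof
  fix x assume "x \<in> type2_errors I \<epsilon> P0 P1"
  then obtain A where x: "x = Re (mtrace I (mmul I P1 A))" and A: "is_test I A"
    and success: "1 - \<epsilon> \<le> Re (mtrace I (mmul I P0 A))"
    unfolding type2_errors_def by blast
  have "mtrace I (mmul I \<rho> (diag_part A)) = mtrace I (mmul I P0 A)"
    using assms(1,2,4) by (rule mtrace_mmul_diag_part)
  moreover have "mtrace I (mmul I \<sigma> (diag_part A)) = mtrace I (mmul I P1 A)"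
    using assms(1,3,5) by (rule mtrace_mmul_diag_part)
  ultimately show "x \<in> type2_errors I \<epsilon> \<rho> \<sigma>"
    using is_test_diag_part[OF assms(1) A] x success
    unfolding type2_errors_def mem_Collect_eq by (intro exI[of _ "diag_part A"]) simp
qed

lemma xiH_le_classical:
  assumes "finite I" "classical I P0" "classical I P1"
    "\<forall>i\<in>I. \<rho> i i = P0 i i" "\<forall>i\<in>I. \<sigma> i i = P1 i i" "0 \<le> \<epsilon>"
  shows "xiH I \<epsilon> \<rho> \<sigma> \<le> xiH I \<epsilon> P0 P1"
  unfolding xiH_eq_Inf_type2_errors
proof (rule cInf_superset_mono)
  show "type2_errors I \<epsilon> P0 P1 \<noteq> {}"
    using trace_in_type2_errors[OF assms(1) _ assms(6)] assms(2)
    unfolding classical_iff density_def by blast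
  show "bdd_below (type2_errors I \<epsilon> \<rho> \<sigma>)" by (rule bdd_below_type2_errors[OF assms(1)])
  show "type2_errors I \<epsilon> P0 P1 \<subseteq> type2_errors I \<epsilon> \<rho> \<sigma>"
    using assms(2,3) unfolding classical_iff
    by (intro type2_errors_diagonal_subset) (simp_all add: assms(1,4,5))
qed

lemma xiH_classical_gap:
  fixes a b :: 'i
  assumes "a \<noteq> b"
  shows "\<exists>P \<sigma>. classical {a, b} P \<and> density {a, b} \<sigma> \<and> (\<forall>x\<in>{a, b}. \<sigma> x x = P x x) \<and>
    xiH {a, b} (1/2) P \<sigma> < xiH {a, b} (1/2) P P"
proof (intro exI conjI)
  note distinct = assms not_sym[OF assms]
  define P where "P = (\<lambda>i j :: 'i. if i = j then 1/2 else (0::complex))"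
  define S where "S = (\<lambda>(_ :: 'i) (_ :: 'i). 1/2 :: complex)"
  define w where "w = (\<lambda>i. if i = a then 1 else (-1::complex))"
  define A where "A = (\<lambda>i j. of_real (1/2) * cnj (w i) * w j)"
  \<comment> \<open>S = |+\<rangle>\<langle>+| and A = |-\<rangle>\<langle>-| = idm - S\<close>
  show P: "classical {a, b} P"
    unfolding classical_iff density_def
    by (auto intro!: psd_diagonal simp: P_def mtrace_def diagonal_def distinct)
  have psd_S: "psd {a, b} S"
    using psd_rank_one[of "1/2" "{a, b}" "\<lambda>_. 1"] by (simp add: S_def)
  then show "density {a, b} S" unfolding density_def by (simp add: mtrace_def S_def distinct)
  show "\<forall>x\<in>{a, b}. S x x = P x x" by (simp add: S_def P_def)
  have test_A: "is_test {a, b} A"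
    unfolding is_test_iff
  proof
    show "psd {a, b} A" unfolding A_def by (rule psd_rank_one) simp
    have "psd {a, b} (\<lambda>i j. idm i j - A i j) \<longleftrightarrow> psd {a, b} S"
      by (rule psd_cong) (auto simp: S_def A_def w_def idm_def distinct)
    then show "psd {a, b} (\<lambda>i j. idm i j - A i j)" using psd_S by simp
  qed
  have "xiH {a, b} (1/2) P S \<le> Re (mtrace {a, b} (mmul {a, b} S A))"
    by (rule xiH_le_test[OF _ test_A])
      (simp_all add: mtrace_def mmul_def P_def A_def w_def distinct)
  also have "\<dots> = 0" by (simp add: mtrace_def mmul_def S_def A_def w_def distinct)
  also have "\<dots> < 1 - 1/2" by simp
  also have "\<dots> \<le> xiH {a, b} (1/2) P P"
    using P by (intro xiH_self_ge) (simp_all add: classical_iff density_def)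
  finally show "xiH {a, b} (1/2) P S < xiH {a, b} (1/2) P P" .
qed

theorem proposition1:
  shows "(\<forall>(Y :: 'a set) (n :: nat) P0 P1 \<rho> \<sigma> (\<epsilon> :: real).
            finite Y \<and>
            classical (seqs Y n) P0 \<and> classical (seqs Y n) P1 \<and>
            density (seqs Y n) \<rho> \<and> density (seqs Y n) \<sigma> \<and>
            (\<forall>x\<in>seqs Y n. \<rho> x x = P0 x x) \<and>
            (\<forall>x\<in>seqs Y n. \<sigma> x x = P1 x x) \<and>
            0 < \<epsilon> \<and> \<epsilon> \<le> 1
          \<longrightarrow> xiH (seqs Y n) \<epsilon> \<rho> \<sigma> \<le> xiH (seqs Y n) \<epsilon> P0 P1)
       \<and>
       (\<exists>(Y :: nat set) (n :: nat) P0 P1 \<sigma> (\<epsilon> :: real).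
            finite Y \<and>
            classical (seqs Y n) P0 \<and> classical (seqs Y n) P1 \<and>
            density (seqs Y n) \<sigma> \<and>
            (\<forall>x\<in>seqs Y n. \<sigma> x x = P1 x x) \<and>
            0 < \<epsilon> \<and> \<epsilon> < 1 \<and>
            xiH (seqs Y n) \<epsilon> P0 \<sigma> < xiH (seqs Y n) \<epsilon> P0 P1)"
proof (rule conjI, goal_cases)
  case 1
  show ?case by (auto intro!: xiH_le_classical finite_seqs)
next
  case 2
  obtain P \<sigma> where "classical {[0], [1 :: nat]} P" "density {[0], [1]} \<sigma>"
    "\<forall>x\<in>{[0], [1]}. \<sigma> x x = P x x" "xiH {[0], [1]} (1/2) P \<sigma> < xiH {[0], [1]} (1/2) P P"
    using xiH_classical_gap[of "[0]" "[1 :: nat]"] by auto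
  then show ?case
    by (intro exI[of _ "{0, 1}"] exI[of _ 1] exI[of _ P] exI[of _ P] exI[of _ \<sigma>] exI[of _ "1/2"])
      (simp add: seqs_Suc_0)
qed

end
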